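(* Let $n\ge 2$. There exists a bijection from $T_n$ to $P_n$, where $T_n$ is the set of labeled threshold graphs on the vertex set $\{1,\dots,n\}$ and $P_n=\{(\pi,A):\pi\in\mathcal{S}_n^+,\ A\subseteq\mathrm{Asc}(\pi)\}$.
   Context: A threshold graph is a graph obtainable from the empty graph by repeatedly adding a new vertex that is either adjacent to all existing vertices or to none; labeled threshold graphs on $n$ vertices have vertex set $\{1,\dots,n\}$ and are distinguished by their edge sets. $\mathcal{S}_n$ is the set of permutations of $\{1,\dots,n\}$ in one-line notation $\pi=\pi_1\cdots\pi_n$. A position $i$ with $1\le i\le n-1$ is an ascent of $\pi$ if $\pi_i<\pi_{i+1}$, and $\mathrm{Asc}(\pi)$ is the set of ascents of $\pi$. For $n\ge 2$, $\mathcal{S}_n^+$ is the set of $\pi\in\mathcal{S}_n$ with $\pi_1<\pi_2$. *)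

theory Defs
  imports "HOL-Combinatorics.Permutations"
begin

inductive threshold_graph :: "'a set \<Rightarrow> 'a set set \<Rightarrow> bool" where
  empty: "threshold_graph {} {}"
| isolated: "\<lbrakk>threshold_graph V E; v \<notin> V\<rbrakk> \<Longrightarrow> threshold_graph (insert v V) E"
| dominating: "\<lbrakk>threshold_graph V E; v \<notin> V\<rbrakk>
     \<Longrightarrow> threshold_graph (insert v V) (E \<union> {{v, u} | u. u \<in> V})"

definition T :: "nat \<Rightarrow> nat set set set" where
  "T n = {E. threshold_graph {1..n} E}"

definition Asc :: "nat \<Rightarrow> (nat \<Rightarrow> nat) \<Rightarrow> nat set" where
  "Asc n p = {i. 1 \<le> i \<and> i \<le> n - 1 \<and> p i < p (Suc i)}"

definition S_plus :: "nat \<Rightarrow> (nat \<Rightarrow> nat) set" where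
  "S_plus n = {p. p permutes {1..n} \<and> p 1 < p 2}"

definition P :: "nat \<Rightarrow> ((nat \<Rightarrow> nat) \<times> nat set) set" where
  "P n = {(p, A). p \<in> S_plus n \<and> A \<subseteq> Asc n p}"

end

theory Submission
  imports Defs
begin

text \<open>A threshold graph on {1..n} is created by adding the vertices p 1, ..., p n of a
  permutation p in turn, p j being joined to all earlier vertices iff its type t j holds.
  Two consecutive vertices of the same type may be swapped without changing the graph, so
  every threshold graph has a canonical creation sequence, increasing along each run of equal
  types. It is unique: its last vertex is the largest of the vertices that are adjacent to all
  others (if the last run is dominating) or to none (otherwise), and removing it leaves the
  canonical sequence of the smaller graph. A canonical sequence is the same as a permutation with
  p 1 < p 2 together with a set A of ascents: 1 \<in> A records the type of the first run, and
  i \<ge> 2 lies in A iff the run continues after position i.\<close>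

definition creation_graph :: "nat \<Rightarrow> (nat \<Rightarrow> 'a) \<Rightarrow> (nat \<Rightarrow> bool) \<Rightarrow> 'a set set" where
  "creation_graph k p t = {{p i, p j} | i j. 1 \<le> i \<and> i < j \<and> j \<le> k \<and> t j}"

lemma creation_graph_0 [simp]: "creation_graph 0 p t = {}"
  unfolding creation_graph_def by auto

lemma creation_graph_Suc:
  "creation_graph (Suc k) p t =
     creation_graph k p t \<union> (if t (Suc k) then {{p (Suc k), u} | u. u \<in> p ` {1..k}} else {})"
proof -
  have "creation_graph (Suc k) p t =
      creation_graph k p t \<union> {{p i, p (Suc k)} | i. 1 \<le> i \<and> i \<le> k \<and> t (Suc k)}"
    unfolding creation_graph_def by (auto simp: le_Suc_eq less_Suc_eq_le) (blast intro: le_imp_less_Suc)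
  also have "{{p i, p (Suc k)} | i. 1 \<le> i \<and> i \<le> k \<and> t (Suc k)} =
      (if t (Suc k) then {{p (Suc k), u} | u. u \<in> p ` {1..k}} else {})"
    by (auto simp: insert_commute)
  finally show ?thesis .
qed

lemma creation_graph_cong:
  assumes "\<And>i. i \<in> {1..k} \<Longrightarrow> p i = q i" "\<And>i. i \<in> {2..k} \<Longrightarrow> t i = s i"
  shows "creation_graph k p t = creation_graph k q s"
proof -
  have "1 \<le> i \<Longrightarrow> i < j \<Longrightarrow> j \<le> k \<Longrightarrow> p i = q i \<and> p j = q j \<and> t j = s j" for i j
    using assms by auto
  then show ?thesis
    unfolding creation_graph_def by (intro Collect_cong) metis
qed

lemma creation_graph_edge_iff:
  assumes "inj_on p {1..k}" "1 \<le> i" "i < j" "j \<le> k"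
  shows "{p i, p j} \<in> creation_graph k p t \<longleftrightarrow> t j"
proof
  assume "{p i, p j} \<in> creation_graph k p t"
  then obtain a b where ab: "{p i, p j} = {p a, p b}" "1 \<le> a" "a < b" "b \<le> k" "t b"
    unfolding creation_graph_def by blast
  with assms have "i = a \<and> j = b \<or> i = b \<and> j = a"
    by (auto simp: doubleton_eq_iff dest!: inj_onD[OF assms(1)])
  with ab assms show "t j" by auto
qed (use assms in \<open>auto simp: creation_graph_def\<close>)

lemma threshold_graph_creation_graph:
  "inj_on p {1..k} \<Longrightarrow> threshold_graph (p ` {1..k}) (creation_graph k p t)"
proof (induction k)
  case 0
  show ?case by (simp add: threshold_graph.empty)
next
  case (Suc k)
  have IH: "threshold_graph (p ` {1..k}) (creation_graph k p t)"
    using Suc inj_on_subset[OF Suc.prems, of "{1..k}"] by auto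
  have new: "p (Suc k) \<notin> p ` {1..k}"
    using Suc.prems by (auto dest: inj_onD)
  have img: "p ` {1..Suc k} = insert (p (Suc k)) (p ` {1..k})"
    by (auto simp: atLeastAtMostSuc_conv)
  show ?case
    unfolding img creation_graph_Suc
    using threshold_graph.isolated[OF IH new] threshold_graph.dominating[OF IH new] by simp
qed

lemma bij_betw_snoc:
  assumes "bij_betw p {1..k} V" "v \<notin> V"
  shows "bij_betw (p(Suc k := v)) {1..Suc k} (insert v V)"
proof -
  have "bij_betw (p(Suc k := v)) {1..k} V"
    using assms(1) by (rule bij_betw_cong[THEN iffD1, rotated]) auto
  then show ?thesis
    using notIn_Un_bij_betw[of "Suc k" "{1..k}" "p(Suc k := v)" V] assms(2)
    by (simp add: atLeastAtMostSuc_conv)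
qed

lemma creation_graph_snoc:
  "creation_graph (Suc k) (p(Suc k := v)) (t(Suc k := b)) =
     creation_graph k p t \<union> (if b then {{v, u} | u. u \<in> p ` {1..k}} else {})"
proof -
  have "creation_graph k (p(Suc k := v)) (t(Suc k := b)) = creation_graph k p t"
    by (rule creation_graph_cong) auto
  moreover have "(p(Suc k := v)) ` {1..k} = p ` {1..k}"
    by auto
  ultimately show ?thesis
    by (simp add: creation_graph_Suc)
qed

lemma threshold_graph_imp_creation_graph:
  "threshold_graph V E \<Longrightarrow>
     finite V \<and> (\<exists>p t. bij_betw p {1..card V} V \<and> E = creation_graph (card V) p t)"
proof (induction rule: threshold_graph.induct)
  case empty
  show ?case by (auto simp: bij_betw_def)
next
  case (isolated V E v)
  then obtain p t where "bij_betw p {1..card V} V" "E = creation_graph (card V) p t"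
    by blast
  with isolated show ?case
    using bij_betw_snoc creation_graph_snoc[of "card V" p v t False] by fastforce
next
  case (dominating V E v)
  then obtain p t where "bij_betw p {1..card V} V" "E = creation_graph (card V) p t"
    by blast
  with dominating show ?case
    using bij_betw_snoc creation_graph_snoc[of "card V" p v t True] by (fastforce simp: bij_betw_def)
qed

definition uniform_vertex :: "'a set \<Rightarrow> 'a set set \<Rightarrow> bool \<Rightarrow> 'a \<Rightarrow> bool" where
  "uniform_vertex V E b v \<longleftrightarrow> v \<in> V \<and> (\<forall>u\<in>V. u \<noteq> v \<longrightarrow> ({u, v} \<in> E \<longleftrightarrow> b))"

text \<open>The type of p 1 does not affect the graph, so it is normalised to that of p 2.\<close>

definition canonical_creation :: "nat \<Rightarrow> (nat \<Rightarrow> 'a::linorder) \<Rightarrow> (nat \<Rightarrow> bool) \<Rightarrow> bool" where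
  "canonical_creation k p t \<longleftrightarrow>
     t 1 = t 2 \<and> (\<forall>i. 1 \<le> i \<and> i < k \<and> t i = t (Suc i) \<longrightarrow> p i < p (Suc i))"

lemma uniform_vertex_type_unique:
  assumes "uniform_vertex V E b v" "uniform_vertex V E c w" "x \<in> V" "y \<in> V" "x \<noteq> y"
  shows "b = c"
proof (cases "v = w")
  case True
  then obtain z where "z \<in> V" "z \<noteq> v"
    using assms(3-5) by blast
  with True assms(1,2) show ?thesis
    unfolding uniform_vertex_def by auto
next
  case False
  with assms(1,2) show ?thesis
    unfolding uniform_vertex_def by (auto simp: insert_commute)
qed

lemma uniform_vertex_last:
  assumes "inj_on p {1..k}" "1 \<le> k"
  shows "uniform_vertex (p ` {1..k}) (creation_graph k p t) (t k) (p k)"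
  unfolding uniform_vertex_def
proof (intro conjI ballI impI)
  fix u assume "u \<in> p ` {1..k}" "u \<noteq> p k"
  then obtain i where "1 \<le> i" "i \<le> k" "u = p i"
    by auto
  moreover from this \<open>u \<noteq> p k\<close> have "i < k"
    by (cases "i = k") auto
  ultimately show "{u, p k} \<in> creation_graph k p t \<longleftrightarrow> t k"
    using creation_graph_edge_iff[OF assms(1)] by simp
qed (use assms in auto)

lemma uniform_vertex_le_last:
  assumes inj: "inj_on p {1..k}" and "2 \<le> k" and canon: "canonical_creation k p t"
    and unif: "uniform_vertex (p ` {1..k}) (creation_graph k p t) b (p i)"
    and i: "1 \<le> i" "i \<le> k"
  shows "p i \<le> p k"
proof -
  let ?G = "creation_graph k p t"
  have adj: "{p j, p i} \<in> ?G \<longleftrightarrow> b" if "j \<in> {1..k}" "j \<noteq> i" for j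
  proof -
    have "p j \<in> p ` {1..k}" "p j \<noteq> p i"
      using that i inj_onD[OF inj, of j i] by auto
    with unif show ?thesis
      unfolding uniform_vertex_def by blast
  qed
  have later: "t j = b" if "i < j" "j \<le> k" for j
    using adj[of j] creation_graph_edge_iff[OF inj i(1) that] that i by (simp add: insert_commute)
  have "t i = b"
  proof (cases "i = 1")
    case True
    then show ?thesis
      using later[of 2] \<open>2 \<le> k\<close> canon unfolding canonical_creation_def by simp
  next
    case False
    then have "1 \<le> i - 1" "i - 1 < i" "i - 1 \<in> {1..k}"
      using i by auto
    then show ?thesis
      using adj[of "i - 1"] creation_graph_edge_iff[OF inj _ _ i(2)] by simp
  qed
  with later have run: "t j = b" if "j \<in> {i..k}" for j
    using that by (cases "j = i") auto
  have "p j \<le> p (Suc j)" if "j \<in> {i..<k}" for j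
  proof -
    have "t j = t (Suc j)"
      using run[of j] run[of "Suc j"] that by simp
    with canon that i show ?thesis
      unfolding canonical_creation_def by (simp add: less_imp_le)
  qed
  then show ?thesis
    using lift_Suc_mono_le_ivl[of "{i..<k}" p i k] i by auto
qed

lemma creation_graph_remove_last:
  assumes "inj_on p {1..Suc k}"
  shows "creation_graph k p t = {e \<in> creation_graph (Suc k) p t. p (Suc k) \<notin> e}"
proof -
  have "p (Suc k) \<notin> e" if e: "e \<in> creation_graph k p t" for e
  proof -
    obtain i j where "e = {p i, p j}" "1 \<le> i" "i < j" "j \<le> k"
      using e unfolding creation_graph_def by blast
    with inj_onD[OF assms, of "Suc k"] show ?thesis
      by force
  qed
  moreover have "{e \<in> creation_graph (Suc k) p t. p (Suc k) \<notin> e} =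
      {e \<in> creation_graph k p t. p (Suc k) \<notin> e}"
    unfolding creation_graph_Suc by auto
  ultimately show ?thesis
    by blast
qed

lemma image_atLeastAtMost_remove_last:
  assumes "inj_on p {1..Suc k}"
  shows "p ` {1..k} = p ` {1..Suc k} - {p (Suc k)}"
proof -
  have "{1..k} = {1..Suc k} - {Suc k}"
    by auto
  then show ?thesis
    using inj_on_image_set_diff[OF assms, of "{1..Suc k}" "{Suc k}"] by simp
qed

lemma canonical_creation_last_eq:
  assumes injp: "inj_on p {1..k}" and injq: "inj_on q {1..k}" and img: "p ` {1..k} = q ` {1..k}"
    and canp: "canonical_creation k p t" and canq: "canonical_creation k q s"
    and gr: "creation_graph k p t = creation_graph k q s" and two: "2 \<le> k"
  shows "p k = q k \<and> t k = s k"
proof -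
  let ?V = "p ` {1..k}" and ?G = "creation_graph k p t"
  have up: "uniform_vertex ?V ?G (t k) (p k)"
    using uniform_vertex_last[OF injp] two by simp
  have uq: "uniform_vertex ?V ?G (s k) (q k)"
    using uniform_vertex_last[OF injq] two img gr by simp
  have "p 1 \<noteq> p k"
    using inj_onD[OF injp, of 1 k] two by auto
  then have last_type: "t k = s k"
    using uniform_vertex_type_unique[OF up uq, of "p 1" "p k"] two by auto
  have "q k \<in> p ` {1..k}" "p k \<in> q ` {1..k}"
    using img two by auto
  then obtain i j where i: "i \<in> {1..k}" "q k = p i" and j: "j \<in> {1..k}" "p k = q j"
    by blast
  have "q k \<le> p k"
    using uniform_vertex_le_last[OF injp two canp, of "s k" i] uq i by simp
  moreover have "p k \<le> q k"
    using uniform_vertex_le_last[OF injq two canq, of "t k" j] up img gr j by simp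
  ultimately show ?thesis
    using last_type by simp
qed

lemma canonical_creation_unique:
  assumes "inj_on p {1..k}" "inj_on q {1..k}" "p ` {1..k} = q ` {1..k}"
    and "canonical_creation k p t" "canonical_creation k q s"
    and "creation_graph k p t = creation_graph k q s"
  shows "(\<forall>i\<in>{1..k}. p i = q i) \<and> (\<forall>i\<in>{2..k}. t i = s i)"
  using assms
proof (induction k)
  case 0
  show ?case by simp
next
  case (Suc k)
  note injp = Suc.prems(1) and injq = Suc.prems(2) and img = Suc.prems(3)
    and canp = Suc.prems(4) and canq = Suc.prems(5) and gr = Suc.prems(6)
  show ?case
  proof (cases "k = 0")
    case True
    with img show ?thesis by simp
  next
    case False
    then have last: "p (Suc k) = q (Suc k)" and last_type: "t (Suc k) = s (Suc k)"
      using canonical_creation_last_eq[OF Suc.prems] by auto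
    have "(\<forall>i\<in>{1..k}. p i = q i) \<and> (\<forall>i\<in>{2..k}. t i = s i)"
    proof (rule Suc.IH)
      show "inj_on p {1..k}" "inj_on q {1..k}"
        using injp injq by (auto elim: inj_on_subset)
      show "p ` {1..k} = q ` {1..k}"
        using image_atLeastAtMost_remove_last[OF injp] image_atLeastAtMost_remove_last[OF injq]
          img last by simp
      show "canonical_creation k p t" "canonical_creation k q s"
        using canp canq unfolding canonical_creation_def by auto
      show "creation_graph k p t = creation_graph k q s"
        using creation_graph_remove_last[OF injp] creation_graph_remove_last[OF injq] gr last
        by simp
    qed
    with last last_type show ?thesis
      by (auto simp: le_Suc_eq)
  qed
qed

lemma creation_graph_transpose:
  assumes "1 \<le> i" "i < k" "t i = t (Suc i)"
  shows "creation_graph k (p \<circ> transpose i (Suc i)) t = creation_graph k p t"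
proof -
  let ?\<tau> = "transpose i (Suc i)"
  have sub: "creation_graph k (q \<circ> ?\<tau>) t \<subseteq> creation_graph k q t" for q :: "nat \<Rightarrow> 'a"
  proof
    fix e assume "e \<in> creation_graph k (q \<circ> ?\<tau>) t"
    then obtain a b where e: "e = {q (?\<tau> a), q (?\<tau> b)}" "1 \<le> a" "a < b" "b \<le> k" "t b"
      unfolding creation_graph_def by auto
    show "e \<in> creation_graph k q t"
    proof (cases "a = i \<and> b = Suc i")
      case True
      then have "e = {q i, q (Suc i)}"
        using e by (auto simp: insert_commute)
      with True e show ?thesis
        unfolding creation_graph_def by blast
    next
      case False
      then have "1 \<le> ?\<tau> a" "?\<tau> a < ?\<tau> b" "?\<tau> b \<le> k" "t (?\<tau> b)"
        using e assms by (auto simp: transpose_def)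
      with e show ?thesis
        unfolding creation_graph_def by blast
    qed
  qed
  have "p \<circ> ?\<tau> \<circ> ?\<tau> = p"
    by (simp add: comp_assoc)
  then show ?thesis
    using sub[of p] sub[of "p \<circ> ?\<tau>"] by simp
qed

lemma weighted_sum_transpose_less:
  fixes p :: "nat \<Rightarrow> nat"
  assumes "1 \<le> i" "i < n" "p (Suc i) < p i"
  shows "(\<Sum>j=1..n. j * p j) < (\<Sum>j=1..n. j * (p \<circ> transpose i (Suc i)) j)"
proof -
  let ?R = "{1..n} - {i} - {Suc i}"
  have split: "sum f {1..n} = f i + f (Suc i) + sum f ?R" for f :: "nat \<Rightarrow> nat"
  proof -
    have "sum f {1..n} = f i + sum f ({1..n} - {i})"
      using assms by (intro sum.remove) auto
    also have "sum f ({1..n} - {i}) = f (Suc i) + sum f ?R"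
      using assms by (intro sum.remove) auto
    finally show ?thesis
      by simp
  qed
  have "(\<Sum>j\<in>?R. j * (p \<circ> transpose i (Suc i)) j) = (\<Sum>j\<in>?R. j * p j)"
    by (rule sum.cong) auto
  moreover have "i * p i + Suc i * p (Suc i) < i * p (Suc i) + Suc i * p i"
    using assms(3) by (simp add: algebra_simps)
  ultimately show ?thesis
    unfolding split[of "\<lambda>j. j * p j"] split[of "\<lambda>j. j * (p \<circ> transpose i (Suc i)) j"]
    by simp
qed

lemma canonical_creation_exists:
  assumes "p0 permutes {1..n}" "t 1 = t 2"
  obtains p where "p permutes {1..n}" "canonical_creation n p t"
    "creation_graph n p t = creation_graph n p0 t"
proof -
  \<comment> \<open>A maximiser of the weight has no descent inside a run:
    swapping the descent would increase the weight.\<close>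
  define S where "S = {p. p permutes {1..n} \<and> creation_graph n p t = creation_graph n p0 t}"
  define W where "W p = (\<Sum>j=1..n. j * p j)" for p :: "nat \<Rightarrow> nat"
  have fin: "finite S"
    unfolding S_def by (rule finite_subset[OF _ finite_permutations[of "{1..n}"]]) auto
  have "p0 \<in> S"
    using assms(1) unfolding S_def by simp
  with fin have "Max (W ` S) \<in> W ` S"
    by (intro Max_in) auto
  then obtain p where "p \<in> S" "W p = Max (W ` S)"
    by auto
  with fin have max: "W q \<le> W p" if "q \<in> S" for q
    using that by simp
  from \<open>p \<in> S\<close> have p: "p permutes {1..n}" "creation_graph n p t = creation_graph n p0 t"
    unfolding S_def by auto
  have "p i < p (Suc i)" if i: "1 \<le> i" "i < n" "t i = t (Suc i)" for i
  proof (rule ccontr)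
    assume "\<not> p i < p (Suc i)"
    moreover have "p i \<noteq> p (Suc i)"
      using permutes_inj[OF p(1)] by (auto dest: injD)
    ultimately have "p (Suc i) < p i"
      by simp
    then have "W p < W (p \<circ> transpose i (Suc i))"
      unfolding W_def using weighted_sum_transpose_less i by blast
    moreover have "p \<circ> transpose i (Suc i) \<in> S"
      using p i creation_graph_transpose[OF i] unfolding S_def
      by (auto intro!: permutes_compose permutes_swap_id)
    ultimately show False
      using max[of "p \<circ> transpose i (Suc i)"] by simp
  qed
  with assms(2) have "canonical_creation n p t"
    unfolding canonical_creation_def by blast
  with p that show ?thesis
    by blast
qed

lemma threshold_graph_canonical_creation:
  assumes "threshold_graph {1..n} E"
  obtains p t where "p permutes {1..n}" "canonical_creation n p t" "E = creation_graph n p t"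
proof -
  obtain p0 t0 where p0: "bij_betw p0 {1..n} {1..n}" and E: "E = creation_graph n p0 t0"
    using threshold_graph_imp_creation_graph[OF assms] by auto
  define p1 where "p1 i = (if i \<in> {1..n} then p0 i else i)" for i
  define t1 where "t1 = t0(1 := t0 2)"
  have "bij_betw p1 {1..n} {1..n}"
    using p0 by (rule bij_betw_cong[THEN iffD1, rotated]) (simp add: p1_def)
  then have "p1 permutes {1..n}"
    by (rule bij_imp_permutes) (auto simp: p1_def)
  moreover have "E = creation_graph n p1 t1"
    unfolding E by (rule creation_graph_cong) (auto simp: p1_def t1_def)
  moreover have "t1 1 = t1 2"
    by (simp add: t1_def)
  ultimately show ?thesis
    using canonical_creation_exists that by metis
qed

primrec decode_types :: "nat set \<Rightarrow> nat \<Rightarrow> bool" where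
  "decode_types A 0 = (1 \<in> A)"
| "decode_types A (Suc i) = (if 2 \<le> i \<and> i \<notin> A then \<not> decode_types A i else decode_types A i)"

definition encode_types :: "nat \<Rightarrow> (nat \<Rightarrow> bool) \<Rightarrow> nat set" where
  "encode_types n t = {j \<in> {1..n - 1}. if j = 1 then t 2 else t j = t (Suc j)}"

lemma decode_types_1_2 [simp]:
  "decode_types A 1 = (1 \<in> A)" "decode_types A 2 = (1 \<in> A)"
  by (simp_all add: numeral_2_eq_2)

lemma decode_types_Suc_eq_iff:
  "2 \<le> i \<Longrightarrow> decode_types A (Suc i) = decode_types A i \<longleftrightarrow> i \<in> A"
  by simp

lemma encode_decode_types:
  assumes "A \<subseteq> {1..n - 1}"
  shows "encode_types n (decode_types A) = A"
proof -
  have "j \<in> encode_types n (decode_types A) \<longleftrightarrow> j \<in> A" for j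
  proof (cases "j = 1")
    case False
    then show ?thesis
      using assms decode_types_Suc_eq_iff[of j A] unfolding encode_types_def
      by (auto simp del: decode_types.simps)
  qed (use assms in \<open>auto simp: encode_types_def\<close>)
  then show ?thesis
    by blast
qed

lemma decode_encode_types:
  assumes "2 \<le> j" "j \<le> n"
  shows "decode_types (encode_types n t) j = t j"
  using assms
proof (induction j rule: dec_induct)
  case base
  then show ?case
    by (auto simp: encode_types_def)
next
  case (step j)
  then have "j \<in> encode_types n t \<longleftrightarrow> t j = t (Suc j)"
    by (auto simp: encode_types_def)
  with step show ?case
    by simp
qed

lemma encode_types_cong:
  "(\<And>i. i \<in> {2..n} \<Longrightarrow> t i = s i) \<Longrightarrow> encode_types n t = encode_types n s"
  unfolding encode_types_def by (intro Collect_cong) (auto simp: Suc_le_eq)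

lemma encode_types_subset_Asc:
  assumes "canonical_creation n p t"
  shows "encode_types n t \<subseteq> Asc n p"
proof
  fix j assume j: "j \<in> encode_types n t"
  then have "1 \<le> j" "j < n" "t j = t (Suc j)"
    using assms unfolding encode_types_def canonical_creation_def
    by (auto simp: numeral_2_eq_2 split: if_splits)
  with assms show "j \<in> Asc n p"
    unfolding canonical_creation_def Asc_def by auto
qed

lemma canonical_creation_decode_types:
  assumes "(p, A) \<in> P n"
  shows "canonical_creation n p (decode_types A)"
  unfolding canonical_creation_def
proof (intro conjI allI impI)
  fix i assume i: "1 \<le> i \<and> i < n \<and> decode_types A i = decode_types A (Suc i)"
  show "p i < p (Suc i)"
  proof (cases "i = 1")
    case True
    with assms show ?thesis
      unfolding P_def S_plus_def by (simp add: numeral_2_eq_2)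
  next
    case False
    with i have "i \<in> A"
      using decode_types_Suc_eq_iff[of i A] by (simp del: decode_types.simps)
    with assms show ?thesis
      unfolding P_def Asc_def by auto
  qed
qed simp

definition threshold_graph_of :: "nat \<Rightarrow> (nat \<Rightarrow> nat) \<times> nat set \<Rightarrow> nat set set" where
  "threshold_graph_of n = (\<lambda>(p, A). creation_graph n p (decode_types A))"

lemma inj_on_threshold_graph_of: "inj_on (threshold_graph_of n) (P n)"
proof (rule inj_onI, clarify)
  fix p A q B
  assume pA: "(p, A) \<in> P n" and qB: "(q, B) \<in> P n"
    and eq: "threshold_graph_of n (p, A) = threshold_graph_of n (q, B)"
  have perm: "p permutes {1..n}" "q permutes {1..n}"
    using pA qB unfolding P_def S_plus_def by auto
  have "creation_graph n p (decode_types A) = creation_graph n q (decode_types B)"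
    using eq unfolding threshold_graph_of_def by simp
  moreover have "p ` {1..n} = q ` {1..n}"
    by (simp only: permutes_image[OF perm(1)] permutes_image[OF perm(2)])
  ultimately have same_perm: "\<forall>i\<in>{1..n}. p i = q i"
    and same_types: "\<forall>i\<in>{2..n}. decode_types A i = decode_types B i"
    using canonical_creation_unique[OF permutes_inj_on[OF perm(1)] permutes_inj_on[OF perm(2)] _
        canonical_creation_decode_types[OF pA] canonical_creation_decode_types[OF qB]]
    by blast+
  have "p = q"
  proof
    fix i
    show "p i = q i"
      using same_perm permutes_not_in[OF perm(1)] permutes_not_in[OF perm(2)]
      by (cases "i \<in> {1..n}") auto
  qed
  moreover have "encode_types n (decode_types A) = encode_types n (decode_types B)"
    using same_types by (intro encode_types_cong) simp
  moreover have "A \<subseteq> {1..n - 1}" "B \<subseteq> {1..n - 1}"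
    using pA qB unfolding P_def Asc_def by auto
  ultimately show "p = q \<and> A = B"
    by (simp add: encode_decode_types)
qed

lemma threshold_graph_of_image:
  assumes "2 \<le> n"
  shows "threshold_graph_of n ` P n = T n"
proof
  show "threshold_graph_of n ` P n \<subseteq> T n"
  proof clarify
    fix p A assume "(p, A) \<in> P n"
    then have p: "p permutes {1..n}"
      unfolding P_def S_plus_def by simp
    have "threshold_graph (p ` {1..n}) (creation_graph n p (decode_types A))"
      by (rule threshold_graph_creation_graph) (rule permutes_inj_on[OF p])
    then show "threshold_graph_of n (p, A) \<in> T n"
      unfolding threshold_graph_of_def T_def permutes_image[OF p] by simp
  qed
next
  show "T n \<subseteq> threshold_graph_of n ` P n"
  proof
    fix E assume "E \<in> T n"
    then obtain p t where p: "p permutes {1..n}" "canonical_creation n p t"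
      and E: "E = creation_graph n p t"
      using threshold_graph_canonical_creation unfolding T_def by blast
    let ?A = "encode_types n t"
    have "p 1 < p 2"
      using p(2) assms unfolding canonical_creation_def by (simp add: numeral_2_eq_2)
    with p have "(p, ?A) \<in> P n"
      using encode_types_subset_Asc unfolding P_def S_plus_def by blast
    moreover have "threshold_graph_of n (p, ?A) = E"
      unfolding threshold_graph_of_def E
      by (simp, rule creation_graph_cong) (simp_all add: decode_encode_types)
    ultimately show "E \<in> threshold_graph_of n ` P n"
      by (metis image_eqI)
  qed
qed

theorem proposition5:
  fixes n :: nat
  assumes "n \<ge> 2"
  shows "\<exists>f. bij_betw f (T n) (P n)"
proof -
  have "bij_betw (threshold_graph_of n) (P n) (T n)"
    using inj_on_threshold_graph_of threshold_graph_of_image[OF assms] by (simp add: bij_betw_def)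
  then show ?thesis
    using bij_betw_the_inv_into by blast
qed

end
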